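(* Consider Algorithm ProxSAGA (described in the context) with minibatch size $b\le n$, $T\ge1$ iterations, and step size $\eta=\rho/L$, where $0<\rho<1/2$ satisfies $$\frac{16 n^2\rho^2}{b^3}+\rho\le 1 .$$ Then the output $x_a$ satisfies $$\mathbb E\big[\|\mathcal G_\eta(x_a)\|^2\big]\le \frac{2L\,(F(x^0)-F(x^* ))}{\rho(1-2\rho)\,T},$$ where $x^*$ is an optimal solution of $\min_x F(x)$.
   Context: Setting: Let $n,d\ge 1$ be integers and $[n]=\{1,\dots,n\}$. Let $f_1,\dots,f_n:\mathbb R^d\to\mathbb R$ be differentiable (possibly nonconvex) functions, each $L$-smooth for some $L>0$, i.e. $\|\nabla f_i(x)-\nabla f_i(y)\|\le L\|x-y\|$ for all $x,y\in\mathbb R^d$ and $i\in[n]$. Let $f=\frac1n\sum_{i=1}^n f_i$. Let $h:\mathbb R^d\to\mathbb R\cup\{+\infty\}$ be proper, lower semicontinuous and convex, with closed domain. Let $F=f+h$, and let $x^*$ be a global minimizer of $F$ on $\mathbb R^d$ (assumed to exist). For $\eta>0$, $\mathrm{prox}_{\eta h}(x):=\arg\min_{y\in\mathbb R^d}\big(h(y)+\frac1{2\eta}\|y-x\|^2\big)$, and the gradient mapping is $\mathcal G_\eta(x):=\frac1\eta\big[x-\mathrm{prox}_{\eta h}(x-\eta\nabla f(x))\big]$. Algorithm ProxSAGA$(x^0,T,b,\eta)$: Given $x^0\in\mathbb R^d$, positive integers $T,b$ and $\eta>0$, set $\alpha^0_i=x^0$ for all $i\in[n]$. For $t=0,1,\dots$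 let $g^t=\frac1n\sum_{i=1}^n\nabla f_i(\alpha^t_i)$. For $t=0,\dots,T-1$: draw two multisets $I_t,J_t$, each consisting of $b$ indices drawn independently and uniformly at random from $[n]$ (with replacement; $I_t$, $J_t$ independent of each other and of all previous draws); set $v^t=\frac1b\sum_{i\in I_t}\big(\nabla f_i(x^t)-\nabla f_i(\alpha^t_i)\big)+g^t$ and $x^{t+1}=\mathrm{prox}_{\eta h}(x^t-\eta v^t)$; set $\alpha^{t+1}_j=x^t$ for $j\in J_t$ and $\alpha^{t+1}_j=\alpha^t_j$ for $j\notin J_t$. The output $x_a$ is chosen uniformly at random from $\{x^0,\dots,x^{T-1}\}$. Expectations are over all randomness of the algorithm. *)

theory Defs
  imports "HOL-Analysis.Analysis" "HOL-Probability.Probability"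
begin

definition proper_fun :: "('a \<Rightarrow> ereal) \<Rightarrow> bool" where
  "proper_fun h \<longleftrightarrow> (\<forall>x. h x \<noteq> -\<infinity>) \<and> (\<exists>x. h x \<noteq> \<infinity>)"

definition lsc_fun :: "('a::topological_space \<Rightarrow> ereal) \<Rightarrow> bool" where
  "lsc_fun h \<longleftrightarrow> (\<forall>x. h x \<le> Liminf (at x) h)"

definition convex_ereal_fun :: "('a::real_vector \<Rightarrow> ereal) \<Rightarrow> bool" where
  "convex_ereal_fun h \<longleftrightarrow> (\<forall>x y t. 0 \<le> t \<and> t \<le> 1 \<longrightarrow>
      h ((1 - t) *\<^sub>R x + t *\<^sub>R y) \<le> ereal (1 - t) * h x + ereal t * h y)"

definition edom :: "('a \<Rightarrow> ereal) \<Rightarrow> 'a set" where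
  "edom h = {x. h x < \<infinity>}"

definition prox :: "real \<Rightarrow> ('a::real_normed_vector \<Rightarrow> ereal) \<Rightarrow> 'a \<Rightarrow> 'a" where
  "prox \<eta> h x = (SOME y. \<forall>z. h y + ereal (norm (y - x)^2 / (2*\<eta>))
                              \<le> h z + ereal (norm (z - x)^2 / (2*\<eta>)))"

definition full_grad :: "nat \<Rightarrow> (nat \<Rightarrow> 'a \<Rightarrow> 'a::real_vector) \<Rightarrow> 'a \<Rightarrow> 'a" where
  "full_grad n gf x = (1 / real n) *\<^sub>R (\<Sum>i<n. gf i x)"

definition grad_map :: "nat \<Rightarrow> (nat \<Rightarrow> 'a \<Rightarrow> 'a::real_normed_vector) \<Rightarrow> ('a \<Rightarrow> ereal) \<Rightarrow> real \<Rightarrow> 'a \<Rightarrow> 'a" where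
  "grad_map n gf h \<eta> x = (1 / \<eta>) *\<^sub>R (x - prox \<eta> h (x - \<eta> *\<^sub>R full_grad n gf x))"

(* a multiset of b indices drawn i.i.d. uniformly from [n] = {..<n}, as a function {..<b} -> {..<n} *)
definition draw :: "nat \<Rightarrow> nat \<Rightarrow> (nat \<Rightarrow> nat) pmf" where
  "draw n b = Pi_pmf {..<b} 0 (\<lambda>_. pmf_of_set {..<n})"

definition saga_update :: "nat \<Rightarrow> nat \<Rightarrow> real \<Rightarrow> (nat \<Rightarrow> 'a \<Rightarrow> 'a::real_normed_vector) \<Rightarrow> ('a \<Rightarrow> ereal)
    \<Rightarrow> 'a \<times> (nat \<Rightarrow> 'a) \<Rightarrow> (nat \<Rightarrow> nat) \<Rightarrow> (nat \<Rightarrow> nat) \<Rightarrow> 'a \<times> (nat \<Rightarrow> 'a)" where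
  "saga_update n b \<eta> gf h s I J =
     (let x = fst s; \<alpha> = snd s;
          g = (1 / real n) *\<^sub>R (\<Sum>i<n. gf i (\<alpha> i));
          v = (1 / real b) *\<^sub>R (\<Sum>k<b. gf (I k) x - gf (I k) (\<alpha> (I k))) + g
      in (prox \<eta> h (x - \<eta> *\<^sub>R v), \<lambda>j. if j \<in> J ` {..<b} then x else \<alpha> j))"

definition saga_step :: "nat \<Rightarrow> nat \<Rightarrow> real \<Rightarrow> (nat \<Rightarrow> 'a \<Rightarrow> 'a::real_normed_vector) \<Rightarrow> ('a \<Rightarrow> ereal)
    \<Rightarrow> 'a \<times> (nat \<Rightarrow> 'a) \<Rightarrow> ('a \<times> (nat \<Rightarrow> 'a)) pmf" where
  "saga_step n b \<eta> gf h s =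
     map_pmf (\<lambda>(I, J). saga_update n b \<eta> gf h s I J) (pair_pmf (draw n b) (draw n b))"

(* distribution of ([x^0,...,x^{t-1}], (x^t, \<alpha>^t)) *)
primrec saga_traj :: "nat \<Rightarrow> nat \<Rightarrow> real \<Rightarrow> (nat \<Rightarrow> 'a \<Rightarrow> 'a::real_normed_vector) \<Rightarrow> ('a \<Rightarrow> ereal)
    \<Rightarrow> 'a \<Rightarrow> nat \<Rightarrow> ('a list \<times> ('a \<times> (nat \<Rightarrow> 'a))) pmf" where
  "saga_traj n b \<eta> gf h x0 0 = return_pmf ([], (x0, \<lambda>_. x0))"
| "saga_traj n b \<eta> gf h x0 (Suc t) =
     bind_pmf (saga_traj n b \<eta> gf h x0 t)
       (\<lambda>(xs, s). map_pmf (\<lambda>s'. (xs @ [fst s], s')) (saga_step n b \<eta> gf h s))"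

definition prox_saga :: "nat \<Rightarrow> nat \<Rightarrow> real \<Rightarrow> (nat \<Rightarrow> 'a \<Rightarrow> 'a::real_normed_vector) \<Rightarrow> ('a \<Rightarrow> ereal)
    \<Rightarrow> 'a \<Rightarrow> nat \<Rightarrow> 'a pmf" where
  "prox_saga n b \<eta> gf h x0 T =
     bind_pmf (saga_traj n b \<eta> gf h x0 T)
       (\<lambda>(xs, s). map_pmf (\<lambda>k. xs ! k) (pmf_of_set {..<T}))"

end

theory Submission
  imports Defs
begin

text \<open>Write \<open>D\<^sup>t = (1/n) \<Sum>\<^sub>i \<parallel>x\<^sup>t - \<alpha>\<^sub>i\<^sup>t\<parallel>\<^sup>2\<close> for the staleness of the gradient table. The Lyapunov
  function \<open>F(x\<^sup>t) + c D\<^sup>t\<close> decreases in expectation by at least \<open>\<eta>/2 \<parallel>G\<^sub>\<eta>(x\<^sup>t)\<parallel>\<^sup>2\<close> in every step.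
  Deterministically, the descent lemma and the variational inequality of the proximal map give
  \<open>F(x\<^sup>t\<^sup>+\<^sup>1) \<le> F(x\<^sup>t) - \<eta>/2 \<parallel>G\<^sub>\<eta>(x\<^sup>t)\<parallel>\<^sup>2 - (1-\<rho>)/(2\<eta>) \<parallel>x\<^sup>t\<^sup>+\<^sup>1 - x\<^sup>t\<parallel>\<^sup>2 + \<eta>/2 \<parallel>\<nabla>f(x\<^sup>t) - v\<^sup>t\<parallel>\<^sup>2\<close>.
  In expectation the last term is at most \<open>\<eta> L\<^sup>2/(2b) D\<^sup>t\<close>, while refreshing the table turns
  \<open>c D\<^sup>t\<close> into at most \<open>c (1 - p/2) D\<^sup>t\<close> plus \<open>(2c/p) \<parallel>x\<^sup>t\<^sup>+\<^sup>1 - x\<^sup>t\<parallel>\<^sup>2\<close> with \<open>p = b/(2n)\<close>; the choice of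
  \<open>c\<close> balances the staleness terms and the step-size condition lets the negative distance term
  absorb the new one. Telescoping over \<open>T\<close> steps and \<open>F \<ge> F(x\<^sup>*)\<close> gives the bound.\<close>

lemma norm_add_square:
  fixes x y :: "'a::real_inner"
  shows "norm (x + y)^2 = norm x^2 + 2 * inner x y + norm y^2"
  by (simp add: power2_norm_eq_inner inner_add_left inner_add_right inner_commute)

lemma norm_diff_square:
  fixes x y :: "'a::real_inner"
  shows "norm (x - y)^2 = norm x^2 - 2 * inner x y + norm y^2"
  by (simp add: power2_norm_eq_inner inner_diff_left inner_diff_right inner_commute)

lemma inner_le_young:
  fixes u v :: "'a::real_inner"
  assumes "\<eta> > 0"
  shows "inner u v \<le> norm v^2 / (2 * \<eta>) + \<eta> / 2 * norm u^2"
proof -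
  have "norm (v - \<eta> *\<^sub>R u)^2 = norm v^2 - 2 * \<eta> * inner u v + \<eta>^2 * norm u^2"
    by (simp add: norm_diff_square inner_commute power_mult_distrib)
  hence "2 * \<eta> * inner u v \<le> norm v^2 + \<eta>^2 * norm u^2"
    using zero_le_power2[of "norm (v - \<eta> *\<^sub>R u)"] by linarith
  thus ?thesis
    using assms by (simp add: field_simps power2_eq_square)
qed

lemma nonpos_if_le_small_multiples:
  fixes E C :: real
  assumes "\<And>t. 0 < t \<Longrightarrow> t \<le> 1 \<Longrightarrow> E \<le> t * C"
  shows "E \<le> 0"
proof (rule ccontr)
  assume E: "\<not> E \<le> 0"
  show False
  proof (cases "C \<le> 0")
    case True
    thus False using assms[of 1] E by simp
  next
    case False
    define t where "t = min 1 (E / (2 * C))"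
    have "t * C \<le> E / (2 * C) * C" using False unfolding t_def by (intro mult_right_mono) auto
    moreover have "0 < t" "t \<le> 1" using E False unfolding t_def by auto
    ultimately show False using assms[of t] E False by simp
  qed
qed

lemma sum_norm_sq_centred_le:
  fixes Y :: "nat \<Rightarrow> 'a::real_inner"
  assumes "0 < n"
  shows "(\<Sum>i<n. norm (Y i - (1 / real n) *\<^sub>R (\<Sum>j<n. Y j))^2) \<le> (\<Sum>i<n. norm (Y i)^2)"
proof -
  define m where "m = (1 / real n) *\<^sub>R (\<Sum>j<n. Y j)"
  have sum_Y: "(\<Sum>j<n. Y j) = real n *\<^sub>R m" using assms unfolding m_def by simp
  have "(\<Sum>i<n. norm (Y i - m)^2) = (\<Sum>i<n. norm (Y i)^2) - 2 * inner (\<Sum>i<n. Y i) m + real n * norm m^2"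
    by (simp add: norm_diff_square sum_subtractf sum.distrib inner_sum_left sum_distrib_left)
  also have "\<dots> = (\<Sum>i<n. norm (Y i)^2) - real n * norm m^2"
    unfolding sum_Y by (simp add: power2_norm_eq_inner)
  finally show ?thesis unfolding m_def by simp
qed

text \<open>Behind the staleness term: an index is refreshed (distance \<open>a\<close>) with
  probability \<open>1 - q\<close> and otherwise keeps a distance of at most \<open>a + b\<close>; Young's inequality with
  parameter \<open>p / 2\<close> on the cross term gives the bound.\<close>

lemma refresh_sq_le:
  fixes q p a b :: real
  assumes "0 \<le> q" "q \<le> 1 - p" "0 < p" "p \<le> 1/2"
  shows "(1 - q) * a^2 + q * (a + b)^2 \<le> 2 / p * a^2 + (1 - p / 2) * b^2"
proof -
  have young: "2 * q * a * b \<le> 2 * q^2 / p * a^2 + p / 2 * b^2"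
  proof -
    have "p / 2 * (b - 2 * q / p * a)^2 = p / 2 * b^2 - 2 * q * a * b + 2 * q^2 / p * a^2"
      using assms by (simp add: power2_eq_square field_simps)
    moreover have "0 \<le> p / 2 * (b - 2 * q / p * a)^2" using assms by simp
    ultimately show ?thesis by linarith
  qed
  have "q^2 \<le> (1 - p)^2" using assms by (intro power_mono) auto
  hence "1 + 2 * q^2 / p \<le> 1 + 2 * (1 - p)^2 / p" using assms by (simp add: divide_right_mono)
  also have "\<dots> \<le> 2 / p"
  proof -
    have "p + 2 * (1 - p)^2 \<le> 2" using assms by (simp add: power2_eq_square algebra_simps)
    hence "(p + 2 * (1 - p)^2) / p \<le> 2 / p" using assms by (intro divide_right_mono) auto
    moreover have "1 + 2 * (1 - p)^2 / p = (p + 2 * (1 - p)^2) / p" using assms by (simp add: field_simps)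
    ultimately show ?thesis by simp
  qed
  finally have "1 + 2 * q^2 / p \<le> 2 / p" .
  hence "(1 + 2 * q^2 / p) * a^2 \<le> 2 / p * a^2" by (rule mult_right_mono) simp
  moreover have "(1 - q) * a^2 + q * (a + b)^2 = a^2 + 2 * q * a * b + q * b^2"
    by (simp add: power2_eq_square algebra_simps)
  moreover have "q * b^2 \<le> (1 - p) * b^2" using assms by (intro mult_right_mono) auto
  ultimately show ?thesis using young by (simp add: algebra_simps)
qed

lemma one_minus_inverse_power_le:
  assumes "0 < n" "b \<le> n"
  shows "(1 - 1 / real n)^b \<le> 1 - real b / (2 * real n)"
proof -
  define x where "x = 1 / real n"
  define y where "y = real b * x"
  have x: "0 < x" "x \<le> 1" and y: "0 \<le> y" "y \<le> 1"
    using assms unfolding x_def y_def by (auto simp: field_simps)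
  have "(1 - x)^b * (1 + y) \<le> (1 - x)^b * (1 + x)^b"
    using Bernoulli_inequality[of x b] x unfolding y_def by (intro mult_left_mono) auto
  also have "\<dots> = (1 - x^2)^b" by (simp add: power_mult_distrib[symmetric] power2_eq_square algebra_simps)
  also have "\<dots> \<le> 1" using x by (intro power_le_one) (auto simp: power_le_one)
  finally have "(1 - x)^b \<le> 1 / (1 + y)" using y by (simp add: field_simps)
  also have "\<dots> \<le> 1 - y / 2"
  proof -
    have "y * y \<le> y" using y by (simp add: mult_left_le_one_le)
    thus ?thesis using y by (simp add: field_simps)
  qed
  finally show ?thesis unfolding x_def y_def by simp
qed

section \<open>Finitely supported expectations and sampling with replacement\<close>

lemma expectation_bind_pmf_finite:
  fixes f :: "'b \<Rightarrow> real"
  assumes fin_M: "finite (set_pmf M)" and fin_N: "\<And>x. x \<in> set_pmf M \<Longrightarrow> finite (set_pmf (N x))"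
  shows "measure_pmf.expectation (bind_pmf M N) f
       = measure_pmf.expectation M (\<lambda>x. measure_pmf.expectation (N x) f)"
proof -
  let ?A = "\<Union>x\<in>set_pmf M. set_pmf (N x)"
  have fin_A: "finite ?A" using assms by auto
  have "measure_pmf.expectation (bind_pmf M N) f = (\<Sum>a\<in>?A. f a * pmf (bind_pmf M N) a)"
    by (rule integral_measure_pmf_real[OF fin_A]) (auto simp: set_bind_pmf)
  also have "\<dots> = (\<Sum>a\<in>?A. f a * (\<Sum>x\<in>set_pmf M. pmf (N x) a * pmf M x))"
    by (intro sum.cong refl arg_cong2[where f="(*)"], unfold pmf_bind,
        rule integral_measure_pmf_real[OF fin_M]) auto
  also have "\<dots> = (\<Sum>x\<in>set_pmf M. (\<Sum>a\<in>?A. f a * pmf (N x) a) * pmf M x)"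
    by (simp add: sum_distrib_left sum_distrib_right sum.swap[of _ ?A] mult_ac)
  also have "\<dots> = (\<Sum>x\<in>set_pmf M. measure_pmf.expectation (N x) f * pmf M x)"
    by (intro sum.cong refl arg_cong2[where f="(*)"] integral_measure_pmf_real[OF fin_A, symmetric])
      auto
  also have "\<dots> = measure_pmf.expectation M (\<lambda>x. measure_pmf.expectation (N x) f)"
    by (rule integral_measure_pmf_real[OF fin_M, symmetric]) auto
  finally show ?thesis .
qed

lemma expectation_pair_pmf_finite:
  fixes f :: "_ \<Rightarrow> real"
  assumes "finite (set_pmf A)" "finite (set_pmf B)"
  shows "measure_pmf.expectation (pair_pmf A B) f
       = measure_pmf.expectation A (\<lambda>x. measure_pmf.expectation B (\<lambda>y. f (x, y)))"
  unfolding pair_pmf_def using assms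
  by (subst expectation_bind_pmf_finite) (auto simp: expectation_bind_pmf_finite set_bind_pmf)

lemma expectation_pair_pmf_finite_swap:
  fixes f :: "_ \<Rightarrow> real"
  assumes "finite (set_pmf A)" "finite (set_pmf B)"
  shows "measure_pmf.expectation (pair_pmf A B) f
       = measure_pmf.expectation B (\<lambda>y. measure_pmf.expectation A (\<lambda>x. f (x, y)))"
  by (subst pair_commute_pmf) (simp add: expectation_pair_pmf_finite assms case_prod_beta)

lemma expectation_mono_pmf_finite:
  fixes f g :: "_ \<Rightarrow> real"
  assumes "finite (set_pmf M)" and "\<And>x. x \<in> set_pmf M \<Longrightarrow> f x \<le> g x"
  shows "measure_pmf.expectation M f \<le> measure_pmf.expectation M g"
  using assms
  by (intro integral_mono_AE) (auto intro: integrable_measure_pmf_finite simp: AE_measure_pmf_iff)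

lemma expectation_affine_pmf_finite:
  fixes f :: "_ \<Rightarrow> real"
  assumes "finite (set_pmf M)"
  shows "measure_pmf.expectation M (\<lambda>x. a + c * f x) = a + c * measure_pmf.expectation M f"
  using assms by (simp add: Bochner_Integration.integral_add integrable_measure_pmf_finite)

lemma finite_set_Pi_pmf:
  "finite A \<Longrightarrow> (\<And>x. finite (set_pmf (p x))) \<Longrightarrow> finite (set_pmf (Pi_pmf A d p))"
  by (subst set_Pi_pmf) (auto intro!: finite_PiE_dflt)

lemma expectation_Pi_pmf_lessThan_Suc:
  fixes g :: "_ \<Rightarrow> real"
  assumes "finite (set_pmf U)"
  shows "measure_pmf.expectation (Pi_pmf {..<Suc b} d (\<lambda>_. U)) g
       = measure_pmf.expectation (Pi_pmf {..<b} d (\<lambda>_. U))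
           (\<lambda>I. measure_pmf.expectation U (\<lambda>y. g (I(b := y))))"
proof -
  have "{..<Suc b} = insert b {..<b}" by auto
  hence "Pi_pmf {..<Suc b} d (\<lambda>_. U)
       = map_pmf (\<lambda>(y, I). I(b := y)) (pair_pmf U (Pi_pmf {..<b} d (\<lambda>_. U)))"
    by (simp add: Pi_pmf_insert)
  thus ?thesis
    using assms by (simp add: expectation_pair_pmf_finite_swap finite_set_Pi_pmf case_prod_beta)
qed

lemma expectation_pmf_of_set_lessThan:
  "0 < n \<Longrightarrow> measure_pmf.expectation (pmf_of_set {..<n}) g = (\<Sum>i<n. g i) / real n"
  by (subst integral_pmf_of_set) auto

lemma finite_set_pmf_of_set_lessThan: "0 < (n::nat) \<Longrightarrow> finite (set_pmf (pmf_of_set {..<n}))"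
  by (subst set_pmf_of_set) auto

lemma finite_set_draw: "0 < n \<Longrightarrow> finite (set_pmf (draw n b))"
  unfolding draw_def by (auto intro!: finite_set_Pi_pmf finite_set_pmf_of_set_lessThan)

text \<open>The draws are independent, so the cross terms have mean zero.\<close>

lemma expectation_draw_norm_sum_sq:
  fixes Z :: "nat \<Rightarrow> 'a::real_inner"
  assumes n: "0 < n" and centred: "(\<Sum>i<n. Z i) = 0"
  shows "measure_pmf.expectation (draw n b) (\<lambda>I. norm (\<Sum>k<b. Z (I k))^2)
       = real b * ((\<Sum>i<n. norm (Z i)^2) / real n)"
proof (induction b)
  case 0
  thus ?case by (simp add: draw_def)
next
  case (Suc b)
  define \<sigma> where "\<sigma> = (\<Sum>i<n. norm (Z i)^2) / real n"
  have one_more: "measure_pmf.expectation (pmf_of_set {..<n}) (\<lambda>y. norm (\<Sum>k<Suc b. Z ((I(b := y)) k))^2)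
      = norm (\<Sum>k<b. Z (I k))^2 + \<sigma>" for I
  proof -
    define S where "S = (\<Sum>k<b. Z (I k))"
    have "(\<Sum>k<Suc b. Z ((I(b := y)) k)) = S + Z y" for y
      unfolding S_def by (simp add: sum.lessThan_Suc)
    hence "measure_pmf.expectation (pmf_of_set {..<n}) (\<lambda>y. norm (\<Sum>k<Suc b. Z ((I(b := y)) k))^2)
        = (\<Sum>y<n. norm S^2 + 2 * inner S (Z y) + norm (Z y)^2) / real n"
      using n by (simp add: expectation_pmf_of_set_lessThan norm_add_square)
    also have "\<dots> = (real n * norm S^2 + 2 * inner S (\<Sum>y<n. Z y) + (\<Sum>y<n. norm (Z y)^2)) / real n"
      by (simp add: sum.distrib inner_sum_right sum_distrib_left)
    also have "\<dots> = norm S^2 + \<sigma>"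
      using n centred unfolding \<sigma>_def by (simp add: field_simps)
    finally show ?thesis unfolding S_def .
  qed
  have "measure_pmf.expectation (draw n (Suc b)) (\<lambda>I. norm (\<Sum>k<Suc b. Z (I k))^2)
      = measure_pmf.expectation (draw n b) (\<lambda>I. norm (\<Sum>k<b. Z (I k))^2 + \<sigma>)"
    unfolding draw_def
    by (subst expectation_Pi_pmf_lessThan_Suc[OF finite_set_pmf_of_set_lessThan[OF n]])
      (rule Bochner_Integration.integral_cong[OF refl one_more])
  also have "\<dots> = measure_pmf.expectation (draw n b) (\<lambda>I. norm (\<Sum>k<b. Z (I k))^2) + \<sigma>"
    using finite_set_draw[OF n]
    by (subst Bochner_Integration.integral_add) (auto intro!: integrable_measure_pmf_finite)
  finally show ?case
    using Suc.IH unfolding \<sigma>_def by (simp add: add_divide_distrib algebra_simps)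
qed

lemma expectation_draw_hit:
  assumes n: "0 < n" and i: "i < n"
  shows "measure_pmf.expectation (draw n b) (\<lambda>J. if i \<in> J ` {..<b} then A else B)
       = (1 - (1 - 1 / real n)^b) * A + (1 - 1 / real n)^b * B"
proof (induction b arbitrary: B)
  case 0
  thus ?case by (simp add: draw_def)
next
  case (Suc b)
  define q where "q = 1 - 1 / real n"
  have one_more: "measure_pmf.expectation (pmf_of_set {..<n})
        (\<lambda>y. if i \<in> (J(b := y)) ` {..<Suc b} then A else B)
      = (if i \<in> J ` {..<b} then A else (1 - q) * A + q * B)" for J
  proof (cases "i \<in> J ` {..<b}")
    case False
    have "(J(b := y)) ` {..<Suc b} = insert y (J ` {..<b})" for y
      by (auto simp: lessThan_Suc image_iff)
    hence "measure_pmf.expectation (pmf_of_set {..<n})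
        (\<lambda>y. if i \<in> (J(b := y)) ` {..<Suc b} then A else B)
      = (\<Sum>y<n. B + (if y = i then A - B else 0)) / real n"
      using n False by (simp add: expectation_pmf_of_set_lessThan) (rule sum.cong; auto)
    also have "\<dots> = (real n * B + (A - B)) / real n"
      using i by (simp add: sum.distrib)
    finally show ?thesis
      using False n unfolding q_def by (simp add: field_simps)
  qed (use n in \<open>auto simp: expectation_pmf_of_set_lessThan lessThan_Suc\<close>)
  have "measure_pmf.expectation (draw n (Suc b)) (\<lambda>J. if i \<in> J ` {..<Suc b} then A else B)
      = measure_pmf.expectation (draw n b) (\<lambda>J. if i \<in> J ` {..<b} then A else (1 - q) * A + q * B)"
    unfolding draw_def
    by (subst expectation_Pi_pmf_lessThan_Suc[OF finite_set_pmf_of_set_lessThan[OF n]])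
      (rule Bochner_Integration.integral_cong[OF refl one_more])
  also have "\<dots> = (1 - q^b) * A + q^b * ((1 - q) * A + q * B)"
    using Suc.IH unfolding q_def by simp
  finally show ?case
    unfolding q_def by (simp add: algebra_simps)
qed

lemma smooth_descent:
  fixes f :: "'a::real_inner \<Rightarrow> real" and g :: "'a \<Rightarrow> 'a"
  assumes grad: "\<And>x. GDERIV f x :> g x"
    and lip: "\<And>x y. norm (g x - g y) \<le> L * norm (x - y)"
  shows "f y \<le> f x + inner (g x) (y - x) + L / 2 * norm (y - x)^2"
proof -
  define d where "d = y - x"
  define \<phi> where "\<phi> t = f (x + t *\<^sub>R d) - t * inner (g x) d - L / 2 * t^2 * norm d ^ 2" for t
  have "DERIV (\<lambda>t. f (x + t *\<^sub>R d)) t :> inner d (g (x + t *\<^sub>R d))" for t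
  proof -
    have "((\<lambda>t. x + t *\<^sub>R d) has_derivative (\<lambda>s. s *\<^sub>R d)) (at t)"
      by (auto intro!: derivative_eq_intros)
    from has_derivative_compose[OF this grad[unfolded gderiv_def]]
    show ?thesis
      unfolding has_field_derivative_def
      by (simp add: mult.commute[of _ "inner d (g (x + t *\<^sub>R d))"])
  qed
  hence \<phi>_deriv: "DERIV \<phi> t :> inner d (g (x + t *\<^sub>R d)) - inner (g x) d - L * t * norm d ^ 2" for t
    unfolding \<phi>_def by (auto intro!: derivative_eq_intros)
  have "\<phi> 1 \<le> \<phi> 0"
  proof (rule DERIV_nonpos_imp_nonincreasing[of 0 1])
    fix t :: real
    assume t: "0 \<le> t" "t \<le> 1"
    have "inner d (g (x + t *\<^sub>R d)) - inner (g x) d = inner (g (x + t *\<^sub>R d) - g x) d"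
      by (simp add: inner_diff_right inner_commute)
    also have "\<dots> \<le> norm (g (x + t *\<^sub>R d) - g x) * norm d"
      by (rule norm_cauchy_schwarz)
    also have "\<dots> \<le> L * norm (t *\<^sub>R d) * norm d"
      using lip[of "x + t *\<^sub>R d" x] by (intro mult_right_mono) auto
    also have "\<dots> = L * t * norm d ^ 2"
      using t by (simp add: power2_eq_square)
    finally show "\<exists>y. DERIV \<phi> t :> y \<and> y \<le> 0"
      using \<phi>_deriv[of t] by auto
  qed simp
  thus ?thesis unfolding \<phi>_def d_def by (simp add: algebra_simps)
qed

text \<open>Lower semicontinuity in a form that, unlike the \<open>Liminf\<close> form of
  \<open>lsc_fun\<close>, is obviously stable under adding a continuous function.\<close>

definition open_superlevels :: "('a::topological_space \<Rightarrow> ereal) \<Rightarrow> bool" where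
  "open_superlevels g \<longleftrightarrow> (\<forall>c. open {z. ereal c < g z})"

lemma lsc_fun_imp_open_superlevels:
  assumes "lsc_fun h" shows "open_superlevels h"
  unfolding open_superlevels_def
proof (intro allI open_subopen[THEN iffD2] ballI)
  fix c x
  assume "x \<in> {z. ereal c < h z}"
  hence "ereal c < Liminf (at x) h"
    using assms unfolding lsc_fun_def by (auto intro: less_le_trans)
  hence "eventually (\<lambda>z. ereal c < h z) (at x)" by (rule less_LiminfD)
  hence "eventually (\<lambda>z. ereal c < h z) (nhds x)"
    using \<open>x \<in> _\<close> by (simp add: eventually_nhds_conv_at)
  thus "\<exists>T. open T \<and> x \<in> T \<and> T \<subseteq> {z. ereal c < h z}"
    unfolding eventually_nhds by auto
qed

lemma open_superlevels_add_continuous: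
  assumes "open_superlevels h" and "continuous_on UNIV q"
  shows "open_superlevels (\<lambda>z. h z + ereal (q z))"
  unfolding open_superlevels_def
proof
  fix c
  have eq: "{z. ereal c < h z + ereal (q z)} = (\<Union>a. {z. ereal a < h z} \<inter> {z. c - a < q z})"
  proof (intro set_eqI iffI)
    fix z
    assume "z \<in> {z. ereal c < h z + ereal (q z)}"
    hence "ereal (c - q z) < h z" by (cases "h z") auto
    then obtain a where "ereal (c - q z) < ereal a" "ereal a < h z"
      using ereal_dense2 by blast
    thus "z \<in> (\<Union>a. {z. ereal a < h z} \<inter> {z. c - a < q z})" by auto
  next
    fix z
    assume "z \<in> (\<Union>a. {z. ereal a < h z} \<inter> {z. c - a < q z})"
    thus "z \<in> {z. ereal c < h z + ereal (q z)}" by (cases "h z") auto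
  qed
  have "open {z. ereal a < h z}" for a
    using assms(1) unfolding open_superlevels_def ..
  moreover have "open {z. c - a < q z}" for a
    using assms(2) by (intro open_Collect_less) (auto intro: continuous_intros)
  ultimately show "open {z. ereal c < h z + ereal (q z)}"
    unfolding eq by (intro open_UN ballI open_Int)
qed

lemma open_superlevels_attains_inf:
  fixes g :: "'a::metric_space \<Rightarrow> ereal"
  assumes g: "open_superlevels g" and K: "compact K" "K \<noteq> {}"
  shows "\<exists>y\<in>K. \<forall>z\<in>K. g y \<le> g z"
proof -
  define m where "m = (INF z\<in>K. g z)"
  define S where "S c = K \<inter> {z. g z \<le> ereal c}" for c
  have "K \<inter> \<Inter>(S ` {c. m < ereal c}) \<noteq> {}"
  proof (rule compact_imp_fip[OF K(1)])
    fix T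
    assume "T \<in> S ` {c. m < ereal c}"
    moreover have "closed {z. g z \<le> ereal c}" for c
      using g unfolding open_superlevels_def closed_def by (simp add: Compl_eq not_le)
    ultimately show "closed T"
      unfolding S_def using compact_imp_closed[OF K(1)] by auto
  next
    fix F
    assume F: "finite F" "F \<subseteq> S ` {c. m < ereal c}"
    then obtain C where C: "C \<subseteq> {c. m < ereal c}" "finite C" "F = S ` C"
      using finite_subset_image by metis
    show "K \<inter> \<Inter>F \<noteq> {}"
    proof (cases "C = {}")
      case False
      hence "m < ereal (Min C)" using C Min_in by blast
      then obtain z where z: "z \<in> K" "g z < ereal (Min C)"
        unfolding m_def by (auto simp: INF_less_iff)
      have "z \<in> S c" if "c \<in> C" for c
        using z that C unfolding S_def by (auto intro: order.trans[OF less_imp_le])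
      thus ?thesis using z C by auto
    qed (use K C in auto)
  qed
  then obtain y where y: "y \<in> K" "\<And>c. m < ereal c \<Longrightarrow> g y \<le> ereal c"
    unfolding S_def by (auto split: if_splits)
  have "g y \<le> m"
  proof (rule ccontr)
    assume "\<not> g y \<le> m"
    then obtain c where "m < ereal c" "ereal c < g y"
      using ereal_dense2 by (meson not_le)
    thus False using y(2) by fastforce
  qed
  thus ?thesis
    using y(1) unfolding m_def by (meson INF_lower order_trans)
qed

section \<open>The proximal map\<close>

text \<open>A proper convex lsc function grows at most linearly downwards: minimise it on the unit ball
  around a point \<open>z\<^sub>0\<close> of its domain and extend the bound outside the ball by convexity along rays
  from \<open>z\<^sub>0\<close>.\<close>

lemma proper_convex_lsc_cone_lower_bound:
  fixes h :: "'a::{real_normed_vector, heine_borel} \<Rightarrow> ereal"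
  assumes cvx: "convex_ereal_fun h" and proper: "proper_fun h" and lsc: "lsc_fun h"
  shows "\<exists>z0 a K. h z0 \<noteq> \<infinity> \<and> 0 \<le> K \<and> (\<forall>z. ereal (a - K * norm (z - z0)) \<le> h z)"
proof -
  obtain z0 where z0: "h z0 \<noteq> \<infinity>" using proper unfolding proper_fun_def by auto
  have not_MInf: "h x \<noteq> -\<infinity>" for x using proper unfolding proper_fun_def by auto
  obtain y1 where y1: "y1 \<in> cball z0 1" "\<And>z. z \<in> cball z0 1 \<Longrightarrow> h y1 \<le> h z"
    using open_superlevels_attains_inf[OF lsc_fun_imp_open_superlevels[OF lsc], of "cball z0 1"]
    by auto
  obtain a where a: "h y1 = ereal a"
    using y1(2)[of z0] z0 not_MInf[of y1] by (cases "h y1") auto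
  obtain h0 where h0: "h z0 = ereal h0" using z0 not_MInf[of z0] by (cases "h z0") auto
  have a_h0: "a \<le> h0" using y1(2)[of z0] a h0 by simp
  define K where "K = h0 - a"
  have "ereal (a - K * norm (z - z0)) \<le> h z" for z
  proof (cases "norm (z - z0) \<le> 1")
    case True
    hence "ereal a \<le> h z" using y1(2)[of z] a by (simp add: dist_norm norm_minus_commute)
    moreover have "a - K * norm (z - z0) \<le> a" using a_h0 unfolding K_def by simp
    ultimately show ?thesis by (meson ereal_less_eq(3) order_trans)
  next
    case False
    define r where "r = norm (z - z0)"
    have r: "1 < r" using False r_def by simp
    define p where "p = (1 - 1 / r) *\<^sub>R z0 + (1 / r) *\<^sub>R z"
    have "p - z0 = (1 / r) *\<^sub>R (z - z0)" unfolding p_def by (simp add: algebra_simps)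
    hence "p \<in> cball z0 1" using r unfolding r_def by (simp add: dist_norm norm_minus_commute)
    hence "ereal a \<le> h p" using y1(2) a by metis
    also have "h p \<le> ereal (1 - 1 / r) * h z0 + ereal (1 / r) * h z"
      using cvx r unfolding convex_ereal_fun_def p_def by simp
    finally have convex_step: "ereal a \<le> ereal (1 - 1 / r) * ereal h0 + ereal (1 / r) * h z"
      unfolding h0 .
    show ?thesis
    proof (cases "h z")
      case (real hz)
      have "a \<le> (1 - 1 / r) * h0 + hz / r" using convex_step real by simp
      hence "r * a \<le> (r - 1) * h0 + hz" using r by (simp add: field_simps)
      hence "a - K * r \<le> hz" using a_h0 unfolding K_def by (simp add: algebra_simps)
      thus ?thesis using real r_def by simp
    qed (use not_MInf in auto)
  qed
  moreover have "0 \<le> K" using a_h0 K_def by simp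
  ultimately show ?thesis using z0 by blast
qed

text \<open>By the cone bound the prox objective exceeds its value at \<open>z\<^sub>0\<close>
  outside a large ball around \<open>w\<close>, and on that compact ball it attains its infimum.\<close>

lemma proper_convex_lsc_prox_exists:
  fixes h :: "'a::{real_normed_vector, heine_borel} \<Rightarrow> ereal"
  assumes cvx: "convex_ereal_fun h" and proper: "proper_fun h" and lsc: "lsc_fun h"
    and \<eta>: "0 < \<eta>"
  shows "\<exists>y. \<forall>z. h y + ereal (norm (y - w)^2 / (2 * \<eta>)) \<le> h z + ereal (norm (z - w)^2 / (2 * \<eta>))"
proof -
  obtain z0 a K where z0: "h z0 \<noteq> \<infinity>" and K: "0 \<le> K"
    and lower: "\<And>z. ereal (a - K * norm (z - z0)) \<le> h z"
    using proper_convex_lsc_cone_lower_bound[OF cvx proper lsc] by blast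
  obtain h0 where h0: "h z0 = ereal h0"
    using z0 proper unfolding proper_fun_def by (cases "h z0") auto
  define q where "q z = norm (z - w)^2 / (2 * \<eta>)" for z
  define \<Psi> where "\<Psi> z = h z + ereal (q z)" for z
  define M where "M = h0 + q z0"
  define C where "C = M - a + K * norm (w - z0)"
  define R where "R = max 1 (2 * \<eta> * (K + \<bar>C\<bar> + 1))"
  have \<Psi>_z0: "\<Psi> z0 = ereal M" unfolding \<Psi>_def M_def h0 by simp
  have outside: "ereal M < \<Psi> z" if "R \<le> norm (z - w)" for z
  proof -
    define u where "u = norm (z - w)"
    have u: "1 \<le> u" "K + \<bar>C\<bar> + 1 \<le> u / (2 * \<eta>)"
      using that \<eta> unfolding R_def u_def by (auto simp: field_simps)
    have "norm (z - z0) \<le> u + norm (w - z0)"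
      unfolding u_def using norm_triangle_ineq[of "z - w" "w - z0"] by simp
    hence "K * norm (z - z0) \<le> K * u + K * norm (w - z0)"
      using K by (metis distrib_left mult_left_mono)
    moreover have "u * (\<bar>C\<bar> + 1) \<le> u * (u / (2 * \<eta>) - K)"
      using u by (intro mult_left_mono) auto
    moreover have "\<bar>C\<bar> + 1 \<le> u * (\<bar>C\<bar> + 1)"
      using mult_right_mono[OF u(1), of "\<bar>C\<bar> + 1"] by simp
    moreover have "q z = u * (u / (2 * \<eta>))"
      unfolding q_def u_def by (simp add: power2_eq_square)
    ultimately have "M < a - K * norm (z - z0) + q z"
      unfolding C_def by (simp add: algebra_simps)
    hence "ereal M < ereal (a - K * norm (z - z0)) + ereal (q z)" by simp
    also have "\<dots> \<le> \<Psi> z" unfolding \<Psi>_def by (intro add_right_mono lower)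
    finally show ?thesis .
  qed
  have "open_superlevels \<Psi>"
    unfolding \<Psi>_def q_def using \<eta>
    by (intro open_superlevels_add_continuous lsc_fun_imp_open_superlevels[OF lsc])
      (auto intro!: continuous_intros)
  moreover have "cball w R \<noteq> {}" unfolding R_def by simp
  ultimately obtain y where y: "\<forall>z\<in>cball w R. \<Psi> y \<le> \<Psi> z"
    using open_superlevels_attains_inf[of \<Psi> "cball w R"] by auto
  have "z0 \<in> cball w R"
    using outside[of z0] \<Psi>_z0 by (force simp: dist_norm norm_minus_commute)
  have "\<Psi> y \<le> \<Psi> z" for z
  proof (cases "z \<in> cball w R")
    case False
    hence "ereal M < \<Psi> z" by (intro outside) (simp add: dist_norm norm_minus_commute)
    thus ?thesis using bspec[OF y \<open>z0 \<in> cball w R\<close>] \<Psi>_z0 by simp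
  qed (use y in auto)
  thus ?thesis unfolding \<Psi>_def q_def by blast
qed

locale proper_convex_lsc =
  fixes h :: "'a::euclidean_space \<Rightarrow> ereal"
  assumes convex: "convex_ereal_fun h" and proper: "proper_fun h" and lsc: "lsc_fun h"
begin

lemma not_MInf: "h x \<noteq> -\<infinity>"
  using proper unfolding proper_fun_def by auto

lemma prox_minimal:
  assumes "0 < \<eta>"
  shows "h (prox \<eta> h w) + ereal (norm (prox \<eta> h w - w)^2 / (2 * \<eta>))
       \<le> h z + ereal (norm (z - w)^2 / (2 * \<eta>))"
  using someI_ex[OF proper_convex_lsc_prox_exists[OF convex proper lsc assms, of w]]
  unfolding prox_def by blast

lemma prox_in_domain:
  assumes "0 < \<eta>"
  shows "h (prox \<eta> h w) \<noteq> \<infinity>"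
proof
  assume "h (prox \<eta> h w) = \<infinity>"
  moreover obtain z0 where "h z0 \<noteq> \<infinity>" using proper unfolding proper_fun_def by auto
  ultimately show False
    using prox_minimal[OF assms, of w z0] not_MInf[of z0] by (cases "h z0") auto
qed

text \<open>Compare the prox objective at \<open>y = prox \<eta> h w\<close> with its value at \<open>(1 - t) y + t z\<close> and let
  \<open>t \<rightarrow> 0\<close>.\<close>

lemma prox_variational_inequality:
  assumes \<eta>: "0 < \<eta>"
  shows "h (prox \<eta> h w) \<le> h z + ereal (inner (w - prox \<eta> h w) (prox \<eta> h w - z) / \<eta>)"
proof (cases "h z")
  case (real hz)
  define y where "y = prox \<eta> h w"
  obtain hy where hy: "h y = ereal hy"
    using prox_in_domain[OF \<eta>, of w] not_MInf[of y] by (cases "h y") (auto simp: y_def)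
  have "hy - hz - inner (y - w) (z - y) / \<eta> \<le> t * (norm (z - y)^2 / (2 * \<eta>))"
    if t: "0 < t" "t \<le> 1" for t
  proof -
    define yt where "yt = (1 - t) *\<^sub>R y + t *\<^sub>R z"
    have "h yt \<le> ereal (1 - t) * h y + ereal t * h z"
      using convex t unfolding convex_ereal_fun_def yt_def by auto
    moreover have "h y + ereal (norm (y - w)^2 / (2 * \<eta>)) \<le> h yt + ereal (norm (yt - w)^2 / (2 * \<eta>))"
      using prox_minimal[OF \<eta>, of w yt] unfolding y_def .
    ultimately have "hy + norm (y - w)^2 / (2 * \<eta>)
        \<le> (1 - t) * hy + t * hz + norm (yt - w)^2 / (2 * \<eta>)"
      using hy real by (cases "h yt") auto
    moreover have "norm (yt - w)^2 = norm (y - w)^2 + 2 * t * inner (y - w) (z - y) + t^2 * norm (z - y)^2"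
    proof -
      have "norm (yt - w)^2 = norm ((y - w) + t *\<^sub>R (z - y))^2"
        unfolding yt_def by (simp add: algebra_simps)
      thus ?thesis by (simp add: norm_add_square power_mult_distrib)
    qed
    ultimately have "t * (hy - hz - inner (y - w) (z - y) / \<eta>) \<le> t * (t * (norm (z - y)^2 / (2 * \<eta>)))"
      using \<eta> by (simp add: field_simps power2_eq_square)
    thus ?thesis using t(1) by (rule mult_left_le_imp_le)
  qed
  hence "hy - hz - inner (y - w) (z - y) / \<eta> \<le> 0" by (rule nonpos_if_le_small_multiples)
  moreover have "inner (y - w) (z - y) = inner (w - y) (y - z)"
    by (metis inner_minus_left inner_minus_right minus_diff_eq)
  ultimately show ?thesis using hy real unfolding y_def by simp
qed (use not_MInf in auto)

end

section \<open>The Lyapunov argument\<close>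

locale prox_saga_setting = proper_convex_lsc h for h :: "'a::euclidean_space \<Rightarrow> ereal" +
  fixes n b :: nat and L \<rho> :: real and f :: "nat \<Rightarrow> 'a \<Rightarrow> real" and gf :: "nat \<Rightarrow> 'a \<Rightarrow> 'a"
  assumes n_pos: "0 < n" and b_pos: "0 < b" and b_le_n: "b \<le> n" and L_pos: "0 < L"
    and grad: "\<And>i x. i < n \<Longrightarrow> GDERIV (f i) x :> gf i x"
    and smooth: "\<And>i x y. i < n \<Longrightarrow> norm (gf i x - gf i y) \<le> L * norm (x - y)"
    and \<rho>_pos: "0 < \<rho>"
    and step_size: "16 * real n ^ 2 * \<rho> ^ 2 / real b ^ 3 + \<rho> \<le> 1"
begin

definition \<eta> :: real where "\<eta> = \<rho> / L"
definition f_avg :: "'a \<Rightarrow> real" where "f_avg x = (1 / real n) * (\<Sum>i<n. f i x)"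

text \<open>\<open>F\<close> is the objective only on the domain of \<open>h\<close> (outside it \<open>real_of_ereal \<infinity> = 0\<close>);
  every iterate after the start lies in that domain.\<close>

definition F :: "'a \<Rightarrow> real" where "F x = f_avg x + real_of_ereal (h x)"
abbreviation grad_f :: "'a \<Rightarrow> 'a" where "grad_f \<equiv> full_grad n gf"

text \<open>\<open>estimator x\<^sup>t \<alpha>\<^sup>t I\<^sub>t\<close> is the direction \<open>v\<^sup>t\<close> of the algorithm.\<close>

definition estimator :: "'a \<Rightarrow> (nat \<Rightarrow> 'a) \<Rightarrow> (nat \<Rightarrow> nat) \<Rightarrow> 'a" where
  "estimator x \<alpha> I = (1 / real b) *\<^sub>R (\<Sum>k<b. gf (I k) x - gf (I k) (\<alpha> (I k)))
                      + (1 / real n) *\<^sub>R (\<Sum>i<n. gf i (\<alpha> i))"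
definition staleness :: "'a \<times> (nat \<Rightarrow> 'a) \<Rightarrow> real" where
  "staleness s = (1 / real n) * (\<Sum>i<n. norm (fst s - snd s i)^2)"

text \<open>An index escapes the refresh set with probability \<open>q\<close>, and \<open>p\<close> is a guaranteed refresh rate,
  \<open>q \<le> 1 - p\<close>. The weight \<open>c\<close> of the staleness in the Lyapunov function is chosen to make
  \<open>staleness_coefficient_balance\<close> hold; the step-size condition is exactly
  \<open>step_coefficient_nonpos\<close>.\<close>

definition c :: real where "c = \<eta> * L^2 * 2 * real n / real b ^ 2"
definition p :: real where "p = real b / (2 * real n)"
definition q :: real where "q = (1 - 1 / real n) ^ b"
definition lyapunov :: "'a \<times> (nat \<Rightarrow> 'a) \<Rightarrow> real" where
  "lyapunov s = F (fst s) + c * staleness s"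

lemma \<eta>_pos: "0 < \<eta>"
  unfolding \<eta>_def using \<rho>_pos L_pos by simp

lemma \<eta>_mult_L: "\<eta> * L = \<rho>"
  unfolding \<eta>_def using L_pos by simp

lemma c_nonneg: "0 \<le> c"
  unfolding c_def using \<eta>_pos by simp

lemma staleness_nonneg: "0 \<le> staleness s"
  unfolding staleness_def by (simp add: sum_nonneg)

lemma p_pos: "0 < p" and p_le_half: "p \<le> 1/2"
  using n_pos b_pos b_le_n unfolding p_def by (auto simp: field_simps)

lemma q_nonneg: "0 \<le> q" and q_le: "q \<le> 1 - p"
  using one_minus_inverse_power_le[OF n_pos b_le_n] n_pos unfolding q_def p_def
  by (auto simp: field_simps)

lemma step_coefficient_nonpos: "(\<rho> - 1) / (2 * \<eta>) + c * (2 / p) \<le> 0"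
proof -
  have "c * (2 / p) = 16 * real n ^ 2 * (\<eta> * L) ^ 2 / real b ^ 3 / (2 * \<eta>)"
    unfolding c_def p_def using \<eta>_pos n_pos b_pos
    by (simp add: field_simps power2_eq_square power3_eq_cube)
  hence "c * (2 / p) = 16 * real n ^ 2 * \<rho> ^ 2 / real b ^ 3 / (2 * \<eta>)"
    unfolding \<eta>_mult_L .
  hence "(\<rho> - 1) / (2 * \<eta>) + c * (2 / p) = (\<rho> - 1 + 16 * real n ^ 2 * \<rho> ^ 2 / real b ^ 3) / (2 * \<eta>)"
    by (simp add: add_divide_distrib)
  also have "\<dots> \<le> 0" using step_size \<eta>_pos by (intro divide_nonpos_pos) auto
  finally show ?thesis .
qed

lemma staleness_coefficient_balance: "c * (1 - p / 2) + \<eta> / 2 * (L^2 / real b) = c"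
  unfolding c_def p_def using n_pos b_pos by (simp add: field_simps power2_eq_square)

lemma f_avg_descent: "f_avg y \<le> f_avg x + inner (grad_f x) (y - x) + L / 2 * norm (y - x)^2"
proof -
  have "(\<Sum>i<n. f i y) \<le> (\<Sum>i<n. f i x + inner (gf i x) (y - x) + L / 2 * norm (y - x)^2)"
    by (intro sum_mono smooth_descent[OF grad smooth]) auto
  also have "\<dots> = (\<Sum>i<n. f i x) + inner (\<Sum>i<n. gf i x) (y - x) + real n * (L / 2 * norm (y - x)^2)"
    by (simp add: sum.distrib inner_sum_left)
  finally show ?thesis
    using n_pos unfolding f_avg_def full_grad_def by (simp add: field_simps inner_scaleR_left)
qed

text \<open>Combine the descent lemma with the variational inequalities at \<open>y = prox (x - \<eta> v)\<close>
  (tested at \<open>y\<^sub>0\<close>) and at the exact proximal-gradient point \<open>y\<^sub>0 = prox (x - \<eta> \<nabla>f x)\<close>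
  (tested at \<open>x\<close>); the cross term \<open>\<langle>\<nabla>f x - v, y - y\<^sub>0\<rangle>\<close> is split by Young's inequality.\<close>

lemma prox_step_bound:
  fixes x v :: 'a
  assumes x: "h x \<noteq> \<infinity>"
  defines "y \<equiv> prox \<eta> h (x - \<eta> *\<^sub>R v)"
  shows "F y \<le> F x - \<eta> / 2 * norm (grad_map n gf h \<eta> x)^2
                 + (\<rho> - 1) / (2 * \<eta>) * norm (y - x)^2 + \<eta> / 2 * norm (grad_f x - v)^2"
proof -
  define y0 where "y0 = prox \<eta> h (x - \<eta> *\<^sub>R grad_f x)"
  define u where "u = y - x"
  define w where "w = y0 - x"
  define d where "d = grad_f x - v"
  obtain hy where hy: "h y = ereal hy"
    using prox_in_domain[OF \<eta>_pos] not_MInf by (cases "h y") (auto simp: y_def)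
  obtain hy0 where hy0: "h y0 = ereal hy0"
    using prox_in_domain[OF \<eta>_pos] not_MInf by (cases "h y0") (auto simp: y0_def)
  obtain hx where hx: "h x = ereal hx" using x not_MInf by (cases "h x") auto
  have "hy \<le> hy0 + inner (x - \<eta> *\<^sub>R v - y) (y - y0) / \<eta>"
    using prox_variational_inequality[OF \<eta>_pos, of "x - \<eta> *\<^sub>R v" y0] hy hy0
    unfolding y_def by simp
  moreover have "hy0 \<le> hx + inner (x - \<eta> *\<^sub>R grad_f x - y0) (y0 - x) / \<eta>"
    using prox_variational_inequality[OF \<eta>_pos, of "x - \<eta> *\<^sub>R grad_f x" x] hy0 hx
    unfolding y0_def by simp
  moreover have "inner (x - \<eta> *\<^sub>R v - y) (y - y0) / \<eta> + inner (x - \<eta> *\<^sub>R grad_f x - y0) (y0 - x) / \<eta>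
      + inner (grad_f x) u = inner d (u - w) - (norm u^2 - inner u w + norm w^2) / \<eta>"
  proof -
    have eqs: "x - \<eta> *\<^sub>R v - y = - u - \<eta> *\<^sub>R v" "y - y0 = u - w"
      "x - \<eta> *\<^sub>R grad_f x - y0 = - w - \<eta> *\<^sub>R grad_f x" "y0 - x = w"
      unfolding u_def w_def by (simp_all add: algebra_simps)
    show ?thesis
      unfolding eqs d_def using \<eta>_pos
      by (simp add: inner_diff_left inner_diff_right inner_add_left inner_add_right
          inner_commute power2_norm_eq_inner field_simps)
  qed
  ultimately have "F y \<le> F x + L / 2 * norm u^2 + inner d (u - w) - (norm u^2 - inner u w + norm w^2) / \<eta>"
    using f_avg_descent[of y x] hy hx unfolding F_def u_def by simp
  also have "\<dots> \<le> F x + L / 2 * norm u^2 + (norm u^2 - 2 * inner u w + norm w^2) / (2 * \<eta>)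
      + \<eta> / 2 * norm d^2 - (norm u^2 - inner u w + norm w^2) / \<eta>"
    using inner_le_young[OF \<eta>_pos, of d "u - w"] by (simp add: norm_diff_square)
  also have "\<dots> = F x - norm w^2 / (2 * \<eta>) + (\<rho> - 1) / (2 * \<eta>) * norm u^2 + \<eta> / 2 * norm d^2"
    using \<eta>_pos \<eta>_mult_L by (simp add: field_simps)
  also have "norm w^2 / (2 * \<eta>) = \<eta> / 2 * norm (grad_map n gf h \<eta> x)^2"
  proof -
    have "norm (grad_map n gf h \<eta> x) = norm w / \<eta>"
      unfolding grad_map_def w_def y0_def using \<eta>_pos by (simp add: norm_minus_commute)
    thus ?thesis using \<eta>_pos by (simp add: power_divide power2_eq_square)
  qed
  finally show ?thesis unfolding u_def d_def .
qed

lemma saga_update_eq: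
  "saga_update n b \<eta> gf h (x, \<alpha>) I J
     = (prox \<eta> h (x - \<eta> *\<^sub>R estimator x \<alpha> I), \<lambda>j. if j \<in> J ` {..<b} then x else \<alpha> j)"
  by (simp add: saga_update_def Let_def estimator_def)

text \<open>The estimator is unbiased: its error is the minibatch mean of the centred differences
  \<open>\<nabla>f\<^sub>i x - \<nabla>f\<^sub>i (\<alpha> i)\<close>, whose second moment is controlled by smoothness.\<close>

lemma estimator_variance_le:
  "measure_pmf.expectation (draw n b) (\<lambda>I. norm (grad_f x - estimator x \<alpha> I)^2)
     \<le> L^2 / real b * staleness (x, \<alpha>)"
proof -
  define Y where "Y i = gf i x - gf i (\<alpha> i)" for i
  define m where "m = (1 / real n) *\<^sub>R (\<Sum>j<n. Y j)"
  define Z where "Z i = Y i - m" for i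
  have centred: "(\<Sum>i<n. Z i) = 0"
    unfolding Z_def m_def using n_pos by (simp add: sum_subtractf sum_constant_scaleR)
  have error: "grad_f x - estimator x \<alpha> I = - ((1 / real b) *\<^sub>R (\<Sum>k<b. Z (I k)))" for I
  proof -
    have "(1 / real b) *\<^sub>R (\<Sum>k<b. Z (I k)) = (1 / real b) *\<^sub>R (\<Sum>k<b. Y (I k)) - m"
      unfolding Z_def using b_pos by (simp add: sum_subtractf scaleR_diff_right sum_constant_scaleR)
    moreover have "grad_f x = m + (1 / real n) *\<^sub>R (\<Sum>i<n. gf i (\<alpha> i))"
      unfolding full_grad_def m_def Y_def by (simp add: sum_subtractf scaleR_diff_right)
    ultimately show ?thesis unfolding estimator_def Y_def by (simp add: algebra_simps)
  qed
  have "measure_pmf.expectation (draw n b) (\<lambda>I. norm (grad_f x - estimator x \<alpha> I)^2)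
      = measure_pmf.expectation (draw n b) (\<lambda>I. (1 / real b)^2 * norm (\<Sum>k<b. Z (I k))^2)"
    unfolding error
    by (intro Bochner_Integration.integral_cong refl) (simp add: power_mult_distrib power_divide)
  also have "\<dots> = (1 / real b)^2 * (real b * ((\<Sum>i<n. norm (Z i)^2) / real n))"
    by (simp only: integral_mult_right_zero expectation_draw_norm_sum_sq[OF n_pos centred])
  also have "\<dots> = (1 / real b) * ((\<Sum>i<n. norm (Z i)^2) / real n)"
    using b_pos by (simp add: power2_eq_square)
  also have "\<dots> \<le> (1 / real b) * ((\<Sum>i<n. norm (Y i)^2) / real n)"
    using sum_norm_sq_centred_le[OF n_pos, of Y] unfolding Z_def m_def
    by (intro mult_left_mono divide_right_mono) auto
  also have "\<dots> \<le> (1 / real b) * ((\<Sum>i<n. L^2 * norm (x - \<alpha> i)^2) / real n)"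
  proof -
    have "norm (Y i)^2 \<le> L^2 * norm (x - \<alpha> i)^2" if "i < n" for i
      using smooth[OF that, of x "\<alpha> i"] unfolding Y_def
      by (metis norm_ge_zero power_mono power_mult_distrib)
    thus ?thesis by (intro mult_left_mono divide_right_mono sum_mono) auto
  qed
  also have "\<dots> = L^2 / real b * staleness (x, \<alpha>)"
    unfolding staleness_def by (simp add: sum_distrib_left[symmetric])
  finally show ?thesis .
qed

lemma finite_set_saga_step: "finite (set_pmf (saga_step n b \<eta> gf h s))"
  unfolding saga_step_def using finite_set_draw[OF n_pos] by simp

lemma saga_step_in_domain: "(x', \<alpha>') \<in> set_pmf (saga_step n b \<eta> gf h s) \<Longrightarrow> h x' \<noteq> \<infinity>"
  unfolding saga_step_def by (auto simp: saga_update_def Let_def prox_in_domain[OF \<eta>_pos])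

text \<open>Every table entry is refreshed with probability \<open>1 - q\<close>; entries that are not refreshed keep
  distance at most \<open>\<parallel>y - x\<parallel> + \<parallel>x - \<alpha> i\<parallel>\<close> from the new iterate \<open>y\<close>.\<close>

lemma expectation_staleness_refresh:
  "measure_pmf.expectation (draw n b) (\<lambda>J. staleness (y, \<lambda>j. if j \<in> J ` {..<b} then x else \<alpha> j))
     \<le> 2 / p * norm (y - x)^2 + (1 - p / 2) * staleness (x, \<alpha>)"
proof -
  have "measure_pmf.expectation (draw n b) (\<lambda>J. staleness (y, \<lambda>j. if j \<in> J ` {..<b} then x else \<alpha> j))
      = measure_pmf.expectation (draw n b)
          (\<lambda>J. (1 / real n) * (\<Sum>i<n. if i \<in> J ` {..<b} then norm (y - x)^2 else norm (y - \<alpha> i)^2))"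
    unfolding staleness_def
    by (intro Bochner_Integration.integral_cong refl arg_cong2[where f="(*)"] sum.cong) auto
  also have "\<dots> = (1 / real n) * (\<Sum>i<n. (1 - q) * norm (y - x)^2 + q * norm (y - \<alpha> i)^2)"
    using finite_set_draw[OF n_pos] expectation_draw_hit[OF n_pos] unfolding q_def
    by (simp add: integral_mult_right_zero integrable_measure_pmf_finite)
  also have "\<dots> \<le> (1 / real n) * (\<Sum>i<n. 2 / p * norm (y - x)^2 + (1 - p / 2) * norm (x - \<alpha> i)^2)"
  proof -
    have "(1 - q) * norm (y - x)^2 + q * norm (y - \<alpha> i)^2
        \<le> 2 / p * norm (y - x)^2 + (1 - p / 2) * norm (x - \<alpha> i)^2" for i
    proof -
      have "norm (y - \<alpha> i) \<le> norm (y - x) + norm (x - \<alpha> i)"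
        using norm_triangle_ineq[of "y - x" "x - \<alpha> i"] by simp
      hence "q * norm (y - \<alpha> i)^2 \<le> q * (norm (y - x) + norm (x - \<alpha> i))^2"
        using q_nonneg by (intro mult_left_mono power_mono) auto
      thus ?thesis
        using refresh_sq_le[OF q_nonneg q_le p_pos p_le_half, of "norm (y - x)" "norm (x - \<alpha> i)"]
        by linarith
    qed
    thus ?thesis using n_pos by (intro mult_left_mono sum_mono) auto
  qed
  also have "\<dots> = 2 / p * norm (y - x)^2 + (1 - p / 2) * staleness (x, \<alpha>)"
  proof -
    have "(\<Sum>i<n. 2 / p * norm (y - x)^2 + (1 - p / 2) * norm (x - \<alpha> i)^2)
        = real n * (2 / p * norm (y - x)^2) + (1 - p / 2) * (\<Sum>i<n. norm (x - \<alpha> i)^2)"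
      by (simp add: sum.distrib sum_distrib_left)
    thus ?thesis unfolding staleness_def fst_conv snd_conv using n_pos
      by (simp only:) (simp add: field_simps)
  qed
  finally show ?thesis .
qed

text \<open>The term \<open>c (2 / p) \<parallel>y - x\<parallel>\<^sup>2\<close> produced by the refresh is absorbed by the negative term of
  \<open>prox_step_bound\<close>.\<close>

lemma expectation_lyapunov_refresh:
  assumes x: "h x \<noteq> \<infinity>"
  shows "measure_pmf.expectation (draw n b) (\<lambda>J. lyapunov (saga_update n b \<eta> gf h (x, \<alpha>) I J))
      \<le> F x - \<eta> / 2 * norm (grad_map n gf h \<eta> x)^2 + \<eta> / 2 * norm (grad_f x - estimator x \<alpha> I)^2
         + c * (1 - p / 2) * staleness (x, \<alpha>)"
proof -
  define y where "y = prox \<eta> h (x - \<eta> *\<^sub>R estimator x \<alpha> I)"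
  have "measure_pmf.expectation (draw n b) (\<lambda>J. lyapunov (saga_update n b \<eta> gf h (x, \<alpha>) I J))
      = F y + c * measure_pmf.expectation (draw n b)
                    (\<lambda>J. staleness (y, \<lambda>j. if j \<in> J ` {..<b} then x else \<alpha> j))"
    unfolding saga_update_eq lyapunov_def y_def[symmetric]
    using finite_set_draw[OF n_pos] by (simp add: expectation_affine_pmf_finite)
  also have "\<dots> \<le> F y + c * (2 / p) * norm (y - x)^2 + c * (1 - p / 2) * staleness (x, \<alpha>)"
    using mult_left_mono[OF expectation_staleness_refresh c_nonneg] by (simp add: algebra_simps)
  also have "\<dots> \<le> F x - \<eta> / 2 * norm (grad_map n gf h \<eta> x)^2
        + ((\<rho> - 1) / (2 * \<eta>) + c * (2 / p)) * norm (y - x)^2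
        + \<eta> / 2 * norm (grad_f x - estimator x \<alpha> I)^2 + c * (1 - p / 2) * staleness (x, \<alpha>)"
    using prox_step_bound[OF x, of "estimator x \<alpha> I", folded y_def] by (simp add: algebra_simps)
  also have "\<dots> \<le> F x - \<eta> / 2 * norm (grad_map n gf h \<eta> x)^2
        + \<eta> / 2 * norm (grad_f x - estimator x \<alpha> I)^2 + c * (1 - p / 2) * staleness (x, \<alpha>)"
    using mult_nonpos_nonneg[OF step_coefficient_nonpos, of "norm (y - x)^2"] by simp
  finally show ?thesis .
qed

lemma expectation_lyapunov_saga_step:
  assumes x: "h x \<noteq> \<infinity>"
  shows "measure_pmf.expectation (saga_step n b \<eta> gf h (x, \<alpha>)) lyapunov
      \<le> lyapunov (x, \<alpha>) - \<eta> / 2 * norm (grad_map n gf h \<eta> x)^2"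
proof -
  define K where "K = F x - \<eta> / 2 * norm (grad_map n gf h \<eta> x)^2 + c * (1 - p / 2) * staleness (x, \<alpha>)"
  have "measure_pmf.expectation (saga_step n b \<eta> gf h (x, \<alpha>)) lyapunov
      = measure_pmf.expectation (draw n b)
          (\<lambda>I. measure_pmf.expectation (draw n b) (\<lambda>J. lyapunov (saga_update n b \<eta> gf h (x, \<alpha>) I J)))"
    unfolding saga_step_def using finite_set_draw[OF n_pos]
    by (simp add: expectation_pair_pmf_finite case_prod_beta)
  also have "\<dots> \<le> measure_pmf.expectation (draw n b)
                   (\<lambda>I. K + \<eta> / 2 * norm (grad_f x - estimator x \<alpha> I)^2)"
    using finite_set_draw[OF n_pos] expectation_lyapunov_refresh[OF x] unfolding K_def
    by (intro expectation_mono_pmf_finite) (auto simp: algebra_simps)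
  also have "\<dots> = K + \<eta> / 2 * measure_pmf.expectation (draw n b) (\<lambda>I. norm (grad_f x - estimator x \<alpha> I)^2)"
    using finite_set_draw[OF n_pos] by (rule expectation_affine_pmf_finite)
  also have "\<dots> \<le> K + \<eta> / 2 * (L^2 / real b * staleness (x, \<alpha>))"
    using estimator_variance_le \<eta>_pos by (intro add_left_mono mult_left_mono) auto
  also have "\<dots> = lyapunov (x, \<alpha>) - \<eta> / 2 * norm (grad_map n gf h \<eta> x)^2"
    using arg_cong[where f="\<lambda>t. t * staleness (x, \<alpha>)", OF staleness_coefficient_balance]
    unfolding K_def lyapunov_def by (simp add: algebra_simps)
  finally show ?thesis .
qed

abbreviation traj :: "'a \<Rightarrow> nat \<Rightarrow> ('a list \<times> 'a \<times> (nat \<Rightarrow> 'a)) pmf" where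
  "traj x0 t \<equiv> saga_traj n b \<eta> gf h x0 t"

definition grad_sq_sum :: "'a list \<Rightarrow> real" where
  "grad_sq_sum xs = (\<Sum>x\<leftarrow>xs. norm (grad_map n gf h \<eta> x)^2)"

lemma saga_traj_Suc:
  "traj x0 (Suc t) = bind_pmf (traj x0 t)
     (\<lambda>z. map_pmf (\<lambda>s'. (fst z @ [fst (snd z)], s')) (saga_step n b \<eta> gf h (snd z)))"
  by (simp add: case_prod_unfold)

lemma finite_set_saga_traj: "finite (set_pmf (traj x0 t))"
  by (induction t) (auto simp: saga_traj_Suc set_bind_pmf finite_set_saga_step)

lemma saga_traj_support:
  assumes "h x0 \<noteq> \<infinity>" and "z \<in> set_pmf (traj x0 t)"
  shows "h (fst (snd z)) \<noteq> \<infinity>" and "length (fst z) = t"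
  using assms(2)
  by (induction t arbitrary: z) (auto simp: assms(1) saga_traj_Suc set_bind_pmf dest: saga_step_in_domain)

lemma expectation_saga_traj_lyapunov:
  assumes x0: "h x0 \<noteq> \<infinity>"
  shows "measure_pmf.expectation (traj x0 t) (\<lambda>z. lyapunov (snd z) + \<eta> / 2 * grad_sq_sum (fst z))
       \<le> F x0"
proof (induction t)
  case 0
  thus ?case by (simp add: lyapunov_def staleness_def grad_sq_sum_def)
next
  case (Suc t)
  let ?V = "\<lambda>z. lyapunov (snd z) + \<eta> / 2 * grad_sq_sum (fst z)"
  have "measure_pmf.expectation (traj x0 (Suc t)) ?V
      = measure_pmf.expectation (traj x0 t)
          (\<lambda>z. measure_pmf.expectation (saga_step n b \<eta> gf h (snd z)) lyapunov
               + \<eta> / 2 * grad_sq_sum (fst z @ [fst (snd z)]))"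
    unfolding saga_traj_Suc
    by (subst expectation_bind_pmf_finite)
      (auto intro!: Bochner_Integration.integral_cong
        simp: finite_set_saga_traj finite_set_saga_step Bochner_Integration.integral_add
        integrable_measure_pmf_finite)
  also have "\<dots> \<le> measure_pmf.expectation (traj x0 t) ?V"
  proof (rule expectation_mono_pmf_finite[OF finite_set_saga_traj])
    fix z
    assume z: "z \<in> set_pmf (traj x0 t)"
    obtain xs x \<alpha> where z_eq: "z = (xs, (x, \<alpha>))" by (metis prod.collapse)
    have "h x \<noteq> \<infinity>" using saga_traj_support(1)[OF x0 z] z_eq by simp
    from expectation_lyapunov_saga_step[OF this, of \<alpha>]
    show "measure_pmf.expectation (saga_step n b \<eta> gf h (snd z)) lyapunov
          + \<eta> / 2 * grad_sq_sum (fst z @ [fst (snd z)]) \<le> ?V z"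
      unfolding z_eq grad_sq_sum_def by (simp add: algebra_simps)
  qed
  finally show ?case using Suc.IH by simp
qed

lemma expectation_prox_saga_grad_map_le:
  assumes x0: "h x0 \<noteq> \<infinity>" and T: "0 < T"
    and opt: "\<And>x. ereal (f_avg xstar) + h xstar \<le> ereal (f_avg x) + h x"
  shows "measure_pmf.expectation (prox_saga n b \<eta> gf h x0 T) (\<lambda>x. norm (grad_map n gf h \<eta> x)^2)
      \<le> 2 / (\<eta> * real T) * (F x0 - F xstar)"
proof -
  have F_opt: "F xstar \<le> F x" if "h x \<noteq> \<infinity>" for x
    using opt[of x] opt[of x0] that x0 not_MInf[of x] not_MInf[of xstar] unfolding F_def
    by (cases "h x"; cases "h xstar") auto
  have "F xstar + \<eta> / 2 * measure_pmf.expectation (traj x0 T) (\<lambda>z. grad_sq_sum (fst z))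
      = measure_pmf.expectation (traj x0 T) (\<lambda>z. F xstar + \<eta> / 2 * grad_sq_sum (fst z))"
    by (rule expectation_affine_pmf_finite[OF finite_set_saga_traj, symmetric])
  also have "\<dots> \<le> measure_pmf.expectation (traj x0 T) (\<lambda>z. lyapunov (snd z) + \<eta> / 2 * grad_sq_sum (fst z))"
  proof (rule expectation_mono_pmf_finite[OF finite_set_saga_traj])
    fix z
    assume "z \<in> set_pmf (traj x0 T)"
    hence "F xstar \<le> F (fst (snd z))" using F_opt saga_traj_support(1)[OF x0] by blast
    moreover have "0 \<le> c * staleness (snd z)" by (intro mult_nonneg_nonneg c_nonneg staleness_nonneg)
    ultimately show "F xstar + \<eta> / 2 * grad_sq_sum (fst z) \<le> lyapunov (snd z) + \<eta> / 2 * grad_sq_sum (fst z)"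
      unfolding lyapunov_def by simp
  qed
  also have "\<dots> \<le> F x0" by (rule expectation_saga_traj_lyapunov[OF x0])
  finally have sum_bound: "measure_pmf.expectation (traj x0 T) (\<lambda>z. grad_sq_sum (fst z))
      \<le> 2 / \<eta> * (F x0 - F xstar)"
    using \<eta>_pos by (simp add: field_simps)
  have "measure_pmf.expectation (prox_saga n b \<eta> gf h x0 T) (\<lambda>x. norm (grad_map n gf h \<eta> x)^2)
      = measure_pmf.expectation (traj x0 T) (\<lambda>z. grad_sq_sum (fst z) / real T)"
  proof -
    have "{..<T} \<noteq> {}" using T by auto
    moreover have "(\<Sum>k<T. norm (grad_map n gf h \<eta> (fst z ! k))^2) = grad_sq_sum (fst z)"
      if "z \<in> set_pmf (traj x0 T)" for z
      using saga_traj_support(2)[OF x0 that] unfolding grad_sq_sum_def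
      by (simp add: sum_list_sum_nth atLeast0LessThan)
    ultimately show ?thesis
      unfolding prox_saga_def using T
      by (subst expectation_bind_pmf_finite)
        (auto intro!: integral_cong_AE simp: AE_measure_pmf_iff finite_set_saga_traj case_prod_beta
          expectation_pmf_of_set_lessThan set_pmf_of_set)
  qed
  also have "\<dots> \<le> 2 / \<eta> * (F x0 - F xstar) / real T"
    unfolding integral_divide_zero by (intro divide_right_mono sum_bound) simp
  finally show ?thesis by (simp add: field_simps)
qed

end

theorem theorem6:
  fixes n b T :: nat and L \<rho> :: real
    and f :: "nat \<Rightarrow> 'a::euclidean_space \<Rightarrow> real" and gf :: "nat \<Rightarrow> 'a \<Rightarrow> 'a"
    and h :: "'a \<Rightarrow> ereal" and x0 xstar :: 'a
  assumes "n \<ge> 1" and "1 \<le> b" and "b \<le> n" and "T \<ge> 1"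
    and "L > 0"
    and grad: "\<And>i x. i < n \<Longrightarrow> GDERIV (f i) x :> gf i x"
    and smooth: "\<And>i x y. i < n \<Longrightarrow> norm (gf i x - gf i y) \<le> L * norm (x - y)"
    and "proper_fun h" and "lsc_fun h" and "convex_ereal_fun h" and "closed (edom h)"
    and opt: "\<And>x. ereal ((1 / real n) * (\<Sum>i<n. f i xstar)) + h xstar
                    \<le> ereal ((1 / real n) * (\<Sum>i<n. f i x)) + h x"
    and "0 < \<rho>" and "\<rho> < 1/2"
    and "16 * real n ^ 2 * \<rho> ^ 2 / real b ^ 3 + \<rho> \<le> 1"
  shows "ereal (measure_pmf.expectation (prox_saga n b (\<rho> / L) gf h x0 T)
                  (\<lambda>x. norm (grad_map n gf h (\<rho> / L) x) ^ 2))
         \<le> ereal (2 * L / (\<rho> * (1 - 2 * \<rho>) * real T))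
            * ((ereal ((1 / real n) * (\<Sum>i<n. f i x0)) + h x0)
               - (ereal ((1 / real n) * (\<Sum>i<n. f i xstar)) + h xstar))"
proof -
  interpret prox_saga_setting h n b L \<rho> f gf
    using assms by unfold_locales auto
  have avg: "(1 / real n) * (\<Sum>i<n. f i x) = f_avg x" for x
    unfolding f_avg_def ..
  obtain z where "h z \<noteq> \<infinity>" using \<open>proper_fun h\<close> unfolding proper_fun_def by auto
  then obtain hs where hs: "h xstar = ereal hs"
    using opt[of z] not_MInf[of xstar] not_MInf[of z] by (cases "h xstar"; cases "h z") auto
  have coeff_pos: "0 < 2 * L / (\<rho> * (1 - 2 * \<rho>) * real T)"
    using assms by simp
  show ?thesis
  proof (cases "h x0")
    case (real h0)
    have "measure_pmf.expectation (prox_saga n b \<eta> gf h x0 T) (\<lambda>x. norm (grad_map n gf h \<eta> x)^2)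
        \<le> 2 / (\<eta> * real T) * (F x0 - F xstar)"
      using expectation_prox_saga_grad_map_le[of x0 T xstar] opt real assms(4)
      unfolding avg by simp
    \<comment> \<open>The argument does not need the factor \<open>1 - 2\<rho>\<close>, nor the closedness of \<open>edom h\<close>.\<close>
    also have "\<dots> \<le> 2 * L / (\<rho> * (1 - 2 * \<rho>) * real T) * (F x0 - F xstar)"
    proof (rule mult_right_mono)
      show "2 / (\<eta> * real T) \<le> 2 * L / (\<rho> * (1 - 2 * \<rho>) * real T)"
        unfolding \<eta>_def using assms by (simp add: field_simps mult_le_cancel_left1)
      show "0 \<le> F x0 - F xstar"
        using opt[of x0] real hs unfolding avg F_def by simp
    qed
    finally show ?thesis
      unfolding \<eta>_def avg F_def using real hs by simp
  qed (use coeff_pos hs not_MInf in auto)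
qed

end
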